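(* Let $\Bbbk$ be an algebraically closed field of characteristic zero and $H$ the $\Bbbk$-algebra generated by $b,c,z$ with relations $b^2=c^2=1$, $bc=cb$, $zb=-bz$, $zc=-cz$, $z^2=0$. Let $e_0=\frac14(1+b)(1+c)$, $e_1=\frac14(1+b)(1-c)$, $e_2=\frac14(1-b)(1+c)$, $e_3=\frac14(1-b)(1-c)$, and let $\tau$ be the permutation of $\{0,1,2,3\}$ with $\tau(0)=3,\tau(1)=2,\tau(2)=1,\tau(3)=0$. Then for $i\in\{0,1,2,3\}$ and $k\in\{0,1,2,3\}\setminus\{i,\tau(i)\}$, the ideals $(e_i+e_{\tau(i)})$, $(z+e_i+e_{\tau(i)})$, $(ze_k+e_i+e_{\tau(i)})$ and $(ze_{\tau(k)}+e_i+e_{\tau(i)})$ are pairwise distinct.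
   Context: $(a)$ denotes the two-sided ideal of $H$ generated by $a$. *)

theory Defs
  imports "HOL-Algebra.Ideal" "HOL-Computational_Algebra.Polynomial"
begin

text \<open>Concrete model of H: an element is its coefficient function on the
monomial basis b^p c^q z^r (p,q,r \<in> {0,1}), encoded by (p,q,r) :: bool*bool*bool.\<close>

type_synonym 'k halg = "bool \<times> bool \<times> bool \<Rightarrow> 'k"

text \<open>Product of basis monomials: b^p1 c^q1 z^r1 * b^p2 c^q2 z^r2.
z^2 = 0; moving z past b^p2 c^q2 gives sign (-1)^(p2+q2); b, c commute, b^2=c^2=1.\<close>
definition mmul :: "bool \<times> bool \<times> bool \<Rightarrow> bool \<times> bool \<times> bool \<Rightarrow> ('k::field \<times> (bool \<times> bool \<times> bool)) option" where
  "mmul m1 m2 = (case m1 of (p1, q1, r1) \<Rightarrow> case m2 of (p2, q2, r2) \<Rightarrow>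
     if r1 \<and> r2 then None
     else Some (if r1 \<and> p2 \<noteq> q2 then -1 else 1, (p1 \<noteq> p2, q1 \<noteq> q2, r1 \<or> r2)))"

definition hmul :: "'k::field halg \<Rightarrow> 'k halg \<Rightarrow> 'k halg" where
  "hmul x y = (\<lambda>m. \<Sum>m1\<in>UNIV. \<Sum>m2\<in>UNIV.
      (case mmul m1 m2 of None \<Rightarrow> 0
        | Some (s, m') \<Rightarrow> if m' = m then s * x m1 * y m2 else 0))"

definition hadd :: "'k::field halg \<Rightarrow> 'k halg \<Rightarrow> 'k halg" where
  "hadd x y = (\<lambda>m. x m + y m)"

definition hsub :: "'k::field halg \<Rightarrow> 'k halg \<Rightarrow> 'k halg" where
  "hsub x y = (\<lambda>m. x m - y m)"

definition hscale :: "'k::field \<Rightarrow> 'k halg \<Rightarrow> 'k halg" where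
  "hscale r x = (\<lambda>m. r * x m)"

definition hbasis :: "bool \<times> bool \<times> bool \<Rightarrow> 'k::field halg" where
  "hbasis m0 = (\<lambda>m. if m = m0 then 1 else 0)"

definition hone :: "'k::field halg" where "hone = hbasis (False, False, False)"
definition hb :: "'k::field halg" where "hb = hbasis (True, False, False)"
definition hc :: "'k::field halg" where "hc = hbasis (False, True, False)"
definition hz :: "'k::field halg" where "hz = hbasis (False, False, True)"

definition H_ring :: "'k::field halg ring" where
  "H_ring = \<lparr>carrier = UNIV, monoid.mult = hmul, one = hone,
             zero = (\<lambda>m. 0), add = hadd\<rparr>"

definition he :: "nat \<Rightarrow> 'k::field halg" where
  "he i = hscale (1/4)
     (if i = 0 then hmul (hadd hone hb) (hadd hone hc)
      else if i = 1 then hmul (hadd hone hb) (hsub hone hc)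
      else if i = 2 then hmul (hsub hone hb) (hadd hone hc)
      else hmul (hsub hone hb) (hsub hone hc))"

definition tau :: "nat \<Rightarrow> nat" where
  "tau i = 3 - i"

end

(*
  Since the e_a are orthogonal idempotents summing to 1 and z e_a = e_(tau a) z, the elements
  e_a and z e_a (a < 4) form a basis of H in which the product is
    e_a e_b = [a = b] e_a,  e_a (z e_b) = [b = tau a] z e_b,  (z e_b) e_a = [a = b] z e_b,
    (z e_a)(z e_b) = 0.
  Hence for A \<subseteq> B with tau A \<subseteq> B the span of {e_a | a \<in> A} \<union> {z e_b | b \<in> B} is a
  two-sided ideal.  With S = {i, tau i} all four generators have e-coordinates the indicator of S,
  and their z-coordinates are 0, constantly 1, the indicator of k and that of tau k.  So each of
  the six pairs of generators is separated by one of the ideals with A = S and B = S, S \<union> {k}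
  or S \<union> {tau k}: it contains one generator of the pair but not the other.
*)
theory Submission
  imports Defs
begin

lemma sum_bool3_UNIV:
  "(\<Sum>m\<in>(UNIV :: (bool \<times> bool \<times> bool) set). f m) =
    f (False,False,False) + f (False,False,True) + f (False,True,False) + f (False,True,True) +
    f (True,False,False) + f (True,False,True) + f (True,True,False) + f (True,True,True)"
proof -
  have U: "(UNIV :: (bool \<times> bool \<times> bool) set) =
    {(False,False,False),(False,False,True),(False,True,False),(False,True,True),
     (True,False,False),(True,False,True),(True,True,False),(True,True,True)}"
    by (auto simp: UNIV_bool)
  show ?thesis
    unfolding U by (simp add: add.assoc)
qed

lemma halg_eq_iff: "(f = (g :: 'k halg)) \<longleftrightarrow>
  f (False,False,False) = g (False,False,False) \<and> f (False,False,True) = g (False,False,True) \<and>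
  f (False,True,False) = g (False,True,False) \<and> f (False,True,True) = g (False,True,True) \<and>
  f (True,False,False) = g (True,False,False) \<and> f (True,False,True) = g (True,False,True) \<and>
  f (True,True,False) = g (True,True,False) \<and> f (True,True,True) = g (True,True,True)"
  unfolding fun_eq_iff split_paired_All all_bool_eq by blast

lemma hmul_assoc: "hmul (hmul x y) w = hmul x (hmul y (w :: 'k::field halg))"
  unfolding halg_eq_iff hmul_def sum_bool3_UNIV by (simp add: mmul_def algebra_simps)

lemma hmul_hone_left: "hmul hone x = (x :: 'k::field halg)"
  unfolding halg_eq_iff hmul_def sum_bool3_UNIV by (simp add: mmul_def hone_def hbasis_def)

lemma hmul_hone_right: "hmul x hone = (x :: 'k::field halg)"
  unfolding halg_eq_iff hmul_def sum_bool3_UNIV by (simp add: mmul_def hone_def hbasis_def)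

lemma hmul_hadd_left: "hmul (hadd x y) w = hadd (hmul x w) (hmul y (w :: 'k::field halg))"
  unfolding halg_eq_iff hmul_def sum_bool3_UNIV by (simp add: mmul_def hadd_def algebra_simps)

lemma hmul_hadd_right: "hmul w (hadd x y) = hadd (hmul w x) (hmul w (y :: 'k::field halg))"
  unfolding halg_eq_iff hmul_def sum_bool3_UNIV by (simp add: mmul_def hadd_def algebra_simps)

lemma ring_H_ring: "ring (H_ring :: 'k::field halg ring)"
proof (rule ringI)
  show "abelian_group (H_ring :: 'k::field halg ring)"
  proof (rule abelian_groupI)
    fix x :: "'k halg"
    show "\<exists>y\<in>carrier H_ring. y \<oplus>\<^bsub>H_ring\<^esub> x = \<zero>\<^bsub>H_ring\<^esub>"
      by (rule bexI[of _ "\<lambda>m. - x m"]) (simp_all add: H_ring_def hadd_def)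
  qed (simp_all add: H_ring_def hadd_def fun_eq_iff algebra_simps)
  show "monoid (H_ring :: 'k::field halg ring)"
    by (rule monoidI) (simp_all add: H_ring_def hmul_assoc hmul_hone_left hmul_hone_right)
qed (simp_all add: H_ring_def hmul_hadd_left hmul_hadd_right)

lemma a_inv_H_ring: "\<ominus>\<^bsub>H_ring\<^esub> x = (\<lambda>m. - x m :: 'k::field)"
proof -
  interpret ring "H_ring :: 'k halg ring" by (rule ring_H_ring)
  show ?thesis
    by (rule minus_equality) (simp_all add: H_ring_def hadd_def fun_eq_iff)
qed

lemma ideal_H_ringI:
  fixes I :: "'k::field halg set"
  assumes "(\<lambda>m. 0) \<in> I"
    and "\<And>x y. x \<in> I \<Longrightarrow> y \<in> I \<Longrightarrow> hadd x y \<in> I"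
    and "\<And>x. x \<in> I \<Longrightarrow> (\<lambda>m. - x m) \<in> I"
    and "\<And>w x. x \<in> I \<Longrightarrow> hmul w x \<in> I"
    and "\<And>w x. x \<in> I \<Longrightarrow> hmul x w \<in> I"
  shows "ideal I H_ring"
proof (rule idealI[OF ring_H_ring])
  show "subgroup I (add_monoid H_ring)"
  proof (rule subgroup.intro)
    fix x assume "x \<in> I"
    then show "inv\<^bsub>add_monoid H_ring\<^esub> x \<in> I"
      using assms(3) a_inv_H_ring[of x] by (simp add: a_inv_def)
  qed (use assms in \<open>simp_all add: H_ring_def\<close>)
qed (use assms in \<open>simp_all add: H_ring_def\<close>)

lemma (in ring) genideal_singleton_neq:
  assumes "ideal I R" "a \<in> I" "b \<in> carrier R" "b \<notin> I"
  shows "Idl {a} \<noteq> Idl {b}"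
proof
  assume "Idl {a} = Idl {b}"
  then have "b \<in> Idl {a}"
    using genideal_self'[OF assms(3)] by simp
  moreover have "Idl {a} \<subseteq> I"
    using genideal_minimal[OF assms(1)] assms(2) by simp
  ultimately show False
    using assms(4) by blast
qed

text \<open>b and c act on e_a by the signs chi_b a and chi_c a; tau a flips both signs.\<close>

definition chi_b :: "nat \<Rightarrow> 'k::field" where
  "chi_b a = (if a < 2 then 1 else -1)"

definition chi_c :: "nat \<Rightarrow> 'k::field" where
  "chi_c a = (if even a then 1 else -1)"

text \<open>The coordinates of x in the basis e_a, z e_a.  The signs in zecoeff are those of tau a,
  because b^p c^q z = \<Sum>a. chi_b a ^ p * chi_c a ^ q * e_a z and e_a z = z e_(tau a).\<close>

definition ecoeff :: "nat \<Rightarrow> 'k::field halg \<Rightarrow> 'k" where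
  "ecoeff a x = x (False,False,False) + chi_b a * x (True,False,False)
     + chi_c a * x (False,True,False) + chi_b a * chi_c a * x (True,True,False)"

definition zecoeff :: "nat \<Rightarrow> 'k::field halg \<Rightarrow> 'k" where
  "zecoeff a x = x (False,False,True) - chi_b a * x (True,False,True)
     - chi_c a * x (False,True,True) + chi_b a * chi_c a * x (True,True,True)"

lemma less_4_cases: "(a::nat) < 4 \<Longrightarrow> a = 0 \<or> a = 1 \<or> a = 2 \<or> a = 3"
  by auto

lemma ecoeff_hmul:
  assumes "a < 4"
  shows "ecoeff a (hmul x y) = ecoeff a x * ecoeff a (y :: 'k::field halg)"
  using less_4_cases[OF assms]
  by (elim disjE)
    (simp_all add: ecoeff_def chi_b_def chi_c_def hmul_def sum_bool3_UNIV mmul_def algebra_simps)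

lemma zecoeff_hmul:
  assumes "a < 4"
  shows "zecoeff a (hmul x y) =
    ecoeff (tau a) x * zecoeff a y + zecoeff a x * ecoeff a (y :: 'k::field halg)"
  using less_4_cases[OF assms]
  by (elim disjE) (simp_all add: ecoeff_def zecoeff_def tau_def chi_b_def chi_c_def
      hmul_def sum_bool3_UNIV mmul_def algebra_simps)

lemma
  shows ecoeff_zero: "ecoeff a (\<lambda>m. 0) = 0"
    and ecoeff_hadd: "ecoeff a (hadd x y) = ecoeff a x + ecoeff a y"
    and ecoeff_uminus: "ecoeff a (\<lambda>m. - x m) = - ecoeff a x"
    and zecoeff_zero: "zecoeff a (\<lambda>m. 0) = 0"
    and zecoeff_hadd: "zecoeff a (hadd x y) = zecoeff a x + zecoeff a y"
    and zecoeff_uminus: "zecoeff a (\<lambda>m. - x m) = - zecoeff a (x :: 'k::field halg)"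
  by (simp_all add: ecoeff_def zecoeff_def hadd_def algebra_simps)

lemma tau_less_4: "a < 4 \<Longrightarrow> tau a < 4"
  by (simp add: tau_def)

lemma tau_tau: "a < 4 \<Longrightarrow> tau (tau a) = a"
  by (simp add: tau_def)

definition coord_ideal :: "nat set \<Rightarrow> nat set \<Rightarrow> 'k::field halg set" where
  "coord_ideal A B = {x. \<forall>a<4. (a \<notin> A \<longrightarrow> ecoeff a x = 0) \<and> (a \<notin> B \<longrightarrow> zecoeff a x = 0)}"

lemma ideal_coord_ideal:
  assumes "\<And>a. a < 4 \<Longrightarrow> a \<in> A \<Longrightarrow> a \<in> B \<and> tau a \<in> B"
  shows "ideal (coord_ideal A B :: 'k::field halg set) H_ring"
proof (rule ideal_H_ringI)
  fix x w :: "'k halg"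
  assume x: "x \<in> coord_ideal A B"
  show "hmul w x \<in> coord_ideal A B"
    using x assms by (auto simp: coord_ideal_def ecoeff_hmul zecoeff_hmul)
  have "tau a \<notin> A" if "a < 4" "a \<notin> B" for a
    using assms[of "tau a"] that by (auto simp: tau_less_4 tau_tau)
  then show "hmul x w \<in> coord_ideal A B"
    using x assms by (auto simp: coord_ideal_def ecoeff_hmul zecoeff_hmul tau_less_4)
qed (auto simp: coord_ideal_def ecoeff_zero ecoeff_hadd ecoeff_uminus
    zecoeff_zero zecoeff_hadd zecoeff_uminus)

lemma ecoeff_he:
  assumes "(2::'k::field) \<noteq> 0" "a < 4" "j < 4"
  shows "ecoeff a (he j :: 'k halg) = (if a = j then 1 else 0)"
proof -
  have "(4::'k) \<noteq> 0"
    using assms(1) by (metis mult_2 mult_eq_0_iff numeral_Bit0 one_add_one)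
  then show ?thesis
    using less_4_cases[OF assms(2)] less_4_cases[OF assms(3)]
    by (elim disjE) (simp_all add: ecoeff_def chi_b_def chi_c_def he_def hmul_def sum_bool3_UNIV
        mmul_def hadd_def hsub_def hscale_def hone_def hb_def hc_def hbasis_def)
qed

lemma zecoeff_he: "zecoeff a (he j :: 'k::field halg) = 0"
  by (simp add: zecoeff_def he_def hmul_def sum_bool3_UNIV
      mmul_def hadd_def hsub_def hscale_def hone_def hb_def hc_def hbasis_def)

lemma ecoeff_hz: "ecoeff a (hz :: 'k::field halg) = 0"
  by (simp add: ecoeff_def hz_def hbasis_def)

lemma zecoeff_hz: "zecoeff a (hz :: 'k::field halg) = 1"
  by (simp add: zecoeff_def hz_def hbasis_def)

lemma genideal_neq_coord_ideal:
  assumes "\<And>a. a < 4 \<Longrightarrow> a \<in> A \<Longrightarrow> a \<in> B \<and> tau a \<in> B"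
    and "x \<in> coord_ideal A B" "a < 4" "a \<notin> B" "zecoeff a y \<noteq> 0"
  shows "genideal H_ring {x} \<noteq> genideal (H_ring :: 'k::field halg ring) {y}"
proof -
  interpret ring "H_ring :: 'k halg ring" by (rule ring_H_ring)
  show ?thesis
    by (rule genideal_singleton_neq[OF ideal_coord_ideal[OF assms(1)] assms(2)])
      (use assms(3-) in \<open>auto simp: coord_ideal_def H_ring_def\<close>)
qed

theorem lemma5p7:
  fixes i k :: nat
  assumes alg_closed: "\<forall>p :: 'k::field_char_0 poly. degree p \<ge> 1 \<longrightarrow> (\<exists>x. poly p x = 0)"
    and i: "i \<in> {0, 1, 2, 3}"
    and k: "k \<in> {0, 1, 2, 3} - {i, tau i}"
  shows "distinct
    [genideal (H_ring :: 'k halg ring) {hadd (he i) (he (tau i))},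
     genideal (H_ring :: 'k halg ring) {hadd hz (hadd (he i) (he (tau i)))},
     genideal (H_ring :: 'k halg ring) {hadd (hmul hz (he k)) (hadd (he i) (he (tau i)))},
     genideal (H_ring :: 'k halg ring) {hadd (hmul hz (he (tau k))) (hadd (he i) (he (tau i)))}]"
proof -
  define S where "S = {i, tau i}"
  define f :: "'k halg" where "f = hadd (he i) (he (tau i))"
  have ik: "i < 4" "tau i < 4" "tau i \<noteq> i"
    "k < 4" "tau k < 4" "k \<notin> S" "tau k \<notin> S" "tau k \<noteq> k"
    using i k by (auto simp: S_def tau_def)
  have closed: "a \<in> B \<and> tau a \<in> B" if "S \<subseteq> B" "a \<in> S" for a B
    using that ik(1) by (auto simp: S_def tau_tau)
  note coeffs = ecoeff_hadd zecoeff_hadd ecoeff_hmul zecoeff_hmul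
    ecoeff_he zecoeff_he ecoeff_hz zecoeff_hz
  have f_coeffs: "ecoeff a f = (if a \<in> S then 1 else 0)" "zecoeff a f = 0" if "a < 4" for a
    using that ik by (auto simp: f_def S_def coeffs)
  have mem: "f \<in> coord_ideal S S"
    "hadd (hmul hz (he k)) f \<in> coord_ideal S (insert k S)"
    "hadd (hmul hz (he (tau k))) f \<in> coord_ideal S (insert (tau k) S)"
    using ik by (auto simp: coord_ideal_def f_coeffs coeffs)
  have witness: "zecoeff a (hadd hz f) = 1" "zecoeff a (hadd (hmul hz (he a)) f) = 1"
    if "a < 4" for a
    using that by (simp_all add: f_coeffs coeffs)
  note separate = genideal_neq_coord_ideal[where A = S]
  have "genideal H_ring {f} \<noteq> genideal H_ring {hadd hz f}"
    "genideal H_ring {f} \<noteq> genideal H_ring {hadd (hmul hz (he k)) f}"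
    by (rule separate[where B = S and a = k]; use ik mem witness closed in auto)+
  moreover have "genideal H_ring {f} \<noteq> genideal H_ring {hadd (hmul hz (he (tau k))) f}"
    by (rule separate[where B = S and a = "tau k"]) (use ik mem witness closed in auto)
  moreover have "genideal H_ring {hadd (hmul hz (he k)) f} \<noteq> genideal H_ring {hadd hz f}"
    "genideal H_ring {hadd (hmul hz (he k)) f} \<noteq> genideal H_ring {hadd (hmul hz (he (tau k))) f}"
    by (rule separate[where B = "insert k S" and a = "tau k"]; use ik mem witness closed in auto)+
  moreover have "genideal H_ring {hadd (hmul hz (he (tau k))) f} \<noteq> genideal H_ring {hadd hz f}"
    by (rule separate[where B = "insert (tau k) S" and a = k]) (use ik mem witness closed in auto)
  ultimately show ?thesis
    unfolding f_def[symmetric] by auto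
qed

end
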